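(* Let $(G,D,\star)$ be a probabilistic metric space (not necessarily complete) where $\star$ is a continuous triangle function, and let $(a_n)\subset G$ be a Cauchy sequence. Then there exists a probabilistic $1$-Lipschitz map $f:G\to\Delta^+$ such that $D(a_n,x)\xrightarrow{w}f(x)$ as $n\to\infty$ for every $x\in G$. In particular $f(a_n)\xrightarrow{w}\mathcal H_0$ as $n\to\infty$.
   Context: A distribution function is a nondecreasing, left-continuous function $F:[-\infty,+\infty]\to[0,1]$ with $F(-\infty)=0$, $F(+\infty)=1$; $\Delta^+$ is the set of distribution functions with $F(0)=0$, ordered pointwise. $\mathcal H_0(t)=0$ for $t\le0$, $1$ for $t>0$. A triangle function is a binary operation $\star$ on $\Delta^+$ that is commutative, associative, nondecreasing in each argument, with $F\star\mathcal H_0=F$. $F_n\xrightarrow{w}F$ (weak convergence) means $F_n(t)\to F(t)$ at every continuity point $t\in\mathbb R$ of $F$; $\star$ is continuous if $F_n\star L_n\xrightarrow{w}F\star L$ whenever $F_n\xrightarrow{w}F$, $L_n\xrightarrow{w}L$. A probabilistic metric space $(G,D,\star)$ consists of a set $G$, a triangle function $\star$ and $D:G\times G\to\Delta^+$ with (i) $D(p,q)=\mathcal H_0$ iff $p=q$; (ii) $D(p,q)=D(q,p)$; (iii) $D(p,q)\star D(q,r)\le D(p,r)$. A sequence $(z_n)\subset G$ is Cauchy if $D(z_n,z_p)(t)\to\mathcal H_0(t)$ for all $t\in\mathbb R$ as $n,p\to\infty$. A map $f:G\to\Delta^+$ is probabilistic $1$-Lipschitz if $D(x,y)\star f(y)\le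 f(x)$ for all $x,y$. *)

theory Defs
  imports "HOL-Analysis.Analysis"
begin

definition distribution_function :: "(ereal \<Rightarrow> real) \<Rightarrow> bool" where
  "distribution_function F \<longleftrightarrow>
     (\<forall>t. 0 \<le> F t \<and> F t \<le> 1) \<and> mono F \<and>
     (\<forall>t::real. ((\<lambda>x::real. F (ereal x)) \<longlongrightarrow> F (ereal t)) (at_left t)) \<and>
     F (-\<infinity>) = 0 \<and> F \<infinity> = 1"

definition DeltaPlus :: "(ereal \<Rightarrow> real) set" where
  "DeltaPlus = {F. distribution_function F \<and> F 0 = 0}"

definition H0 :: "ereal \<Rightarrow> real" where
  "H0 t = (if t \<le> 0 then 0 else 1)"

definition triangle_function :: "((ereal \<Rightarrow> real) \<Rightarrow> (ereal \<Rightarrow> real) \<Rightarrow> (ereal \<Rightarrow> real)) \<Rightarrow> bool" where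
  "triangle_function T \<longleftrightarrow>
     (\<forall>F\<in>DeltaPlus. \<forall>L\<in>DeltaPlus. T F L \<in> DeltaPlus) \<and>
     (\<forall>F\<in>DeltaPlus. \<forall>L\<in>DeltaPlus. T F L = T L F) \<and>
     (\<forall>F\<in>DeltaPlus. \<forall>L\<in>DeltaPlus. \<forall>M\<in>DeltaPlus. T (T F L) M = T F (T L M)) \<and>
     (\<forall>F\<in>DeltaPlus. \<forall>F'\<in>DeltaPlus. \<forall>L\<in>DeltaPlus. F \<le> F' \<longrightarrow> T F L \<le> T F' L) \<and>
     (\<forall>F\<in>DeltaPlus. T F H0 = F)"

definition weak_conv :: "(nat \<Rightarrow> ereal \<Rightarrow> real) \<Rightarrow> (ereal \<Rightarrow> real) \<Rightarrow> bool" where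
  "weak_conv Fs F \<longleftrightarrow>
     (\<forall>t::real. isCont (\<lambda>x::real. F (ereal x)) t \<longrightarrow> (\<lambda>n. Fs n (ereal t)) \<longlonglongrightarrow> F (ereal t))"

definition continuous_triangle_function :: "((ereal \<Rightarrow> real) \<Rightarrow> (ereal \<Rightarrow> real) \<Rightarrow> (ereal \<Rightarrow> real)) \<Rightarrow> bool" where
  "continuous_triangle_function T \<longleftrightarrow> triangle_function T \<and>
     (\<forall>Fs Ls F L. (\<forall>n. Fs n \<in> DeltaPlus) \<longrightarrow> (\<forall>n. Ls n \<in> DeltaPlus) \<longrightarrow>
        F \<in> DeltaPlus \<longrightarrow> L \<in> DeltaPlus \<longrightarrow> weak_conv Fs F \<longrightarrow> weak_conv Ls L \<longrightarrow>
        weak_conv (\<lambda>n. T (Fs n) (Ls n)) (T F L))"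

definition PM_space :: "('a \<Rightarrow> 'a \<Rightarrow> (ereal \<Rightarrow> real)) \<Rightarrow> ((ereal \<Rightarrow> real) \<Rightarrow> (ereal \<Rightarrow> real) \<Rightarrow> (ereal \<Rightarrow> real)) \<Rightarrow> bool" where
  "PM_space D T \<longleftrightarrow> triangle_function T \<and>
     (\<forall>p q. D p q \<in> DeltaPlus) \<and>
     (\<forall>p q. D p q = H0 \<longleftrightarrow> p = q) \<and>
     (\<forall>p q. D p q = D q p) \<and>
     (\<forall>p q r. T (D p q) (D q r) \<le> D p r)"

definition PM_Cauchy :: "('a \<Rightarrow> 'a \<Rightarrow> (ereal \<Rightarrow> real)) \<Rightarrow> (nat \<Rightarrow> 'a) \<Rightarrow> bool" where
  "PM_Cauchy D z \<longleftrightarrow>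
     (\<forall>t::real. \<forall>e>0. \<exists>N. \<forall>n\<ge>N. \<forall>p\<ge>N. \<bar>D (z n) (z p) (ereal t) - H0 (ereal t)\<bar> < e)"

definition prob_1_Lipschitz :: "('a \<Rightarrow> 'a \<Rightarrow> (ereal \<Rightarrow> real)) \<Rightarrow> ((ereal \<Rightarrow> real) \<Rightarrow> (ereal \<Rightarrow> real) \<Rightarrow> (ereal \<Rightarrow> real)) \<Rightarrow> ('a \<Rightarrow> (ereal \<Rightarrow> real)) \<Rightarrow> bool" where
  "prob_1_Lipschitz D T f \<longleftrightarrow> (\<forall>x. f x \<in> DeltaPlus) \<and> (\<forall>x y. T (D x y) (f y) \<le> f x)"

end

theory Submission imports Defs "HOL-Probability.Helly_Selection" begin

text \<open>For fixed \<open>x\<close>, Helly's selection theorem gives subsequences along which \<open>D (a n) x\<close>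
converges weakly. For two such subsequential limits \<open>L\<^sub>1, L\<^sub>2\<close>, the triangle inequality
\<open>T (D (a p\<^sub>n) (a q\<^sub>n)) (D (a q\<^sub>n) x) \<le> D (a p\<^sub>n) x\<close> passes to the limit by continuity of \<open>T\<close>;
since \<open>D (a p\<^sub>n) (a q\<^sub>n) \<rightarrow> H0\<close> by the Cauchy property, this gives \<open>L\<^sub>2 \<le> L\<^sub>1\<close>, and by symmetry
\<open>L\<^sub>1 = L\<^sub>2\<close>. Hence the whole sequence converges to some \<open>f x\<close>. Letting \<open>n \<rightarrow> \<infinity>\<close> in
\<open>T (D x y) (D (a n) y) \<le> D (a n) x\<close> shows that \<open>f\<close> is 1-Lipschitz, and \<open>f (a n) \<rightarrow> H0\<close>
because \<open>f (a n) \<ge> D (a m) (a n)\<close> in the limit \<open>m \<rightarrow> \<infinity>\<close>, up to continuity points.\<close>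

hide_const (open) Weak_Convergence.weak_conv

lemma DeltaPlusD:
  assumes "F \<in> DeltaPlus"
  shows "0 \<le> F t" "F t \<le> 1" "mono F" "F (-\<infinity>) = 0" "F \<infinity> = 1" "F 0 = 0"
    "((\<lambda>x::real. F (ereal x)) \<longlongrightarrow> F (ereal r)) (at_left r)"
  using assms unfolding DeltaPlus_def distribution_function_def by auto

lemma DeltaPlus_eq_0_nonpos:
  assumes "F \<in> DeltaPlus" "t \<le> 0"
  shows "F t = 0"
  using DeltaPlusD[OF assms(1)] assms(2) by (metis antisym monoD)

lemma DeltaPlus_mono_real:
  assumes "F \<in> DeltaPlus"
  shows "mono (\<lambda>x::real. F (ereal x))"
  using DeltaPlusD(3)[OF assms] by (auto simp: mono_def)

lemma H0_in_DeltaPlus: "H0 \<in> DeltaPlus"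
proof -
  have "\<forall>\<^sub>F x in at_left t. H0 (ereal x) = H0 (ereal t)" for t :: real
  proof (cases "t \<le> 0")
    case True
    then show ?thesis
      unfolding eventually_at_left[of "t - 1" t, simplified]
      by (intro exI[of _ "t - 1"]) (auto simp: H0_def)
  next
    case False
    then have "0 < t" by simp
    then show ?thesis
      unfolding eventually_at_left[OF \<open>0 < t\<close>] by (intro exI[of _ 0]) (auto simp: H0_def)
  qed
  then have "((\<lambda>x::real. H0 (ereal x)) \<longlongrightarrow> H0 (ereal t)) (at_left t)" for t
    by (rule tendsto_eventually)
  moreover have "mono H0" by (auto simp: mono_def H0_def)
  ultimately show ?thesis
    unfolding DeltaPlus_def distribution_function_def by (auto simp: H0_def)
qed

lemma mono_common_continuity_point:
  fixes g h :: "real \<Rightarrow> real"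
  assumes "mono g" "mono h" "a < b"
  shows "\<exists>u. a < u \<and> u < b \<and> isCont g u \<and> isCont h u"
proof -
  have "countable ({x. \<not> isCont g x} \<union> {x. \<not> isCont h x})"
    using mono_ctble_discont[OF assms(1)] mono_ctble_discont[OF assms(2)] by auto
  from open_minus_countable[OF this, of "{a<..<b}"] assms(3)
  show ?thesis by auto
qed

lemma DeltaPlus_le_if_le_at_continuity_points:
  assumes L1: "L1 \<in> DeltaPlus" and L2: "L2 \<in> DeltaPlus"
    and le: "\<And>t. isCont (\<lambda>x::real. L1 (ereal x)) t \<Longrightarrow> isCont (\<lambda>x::real. L2 (ereal x)) t
             \<Longrightarrow> L1 (ereal t) \<le> L2 (ereal t)"
  shows "L1 \<le> L2"
proof (rule le_funI)
  fix t :: ereal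
  show "L1 t \<le> L2 t"
  proof (cases t)
    case (real r)
    show ?thesis
    proof (rule ccontr)
      assume "\<not> L1 t \<le> L2 t"
      then have "L2 (ereal r) < L1 (ereal r)" using real by simp
      from order_tendstoD(1)[OF DeltaPlusD(7)[OF L1] this]
      obtain b where b: "b < r" "\<And>y. b < y \<Longrightarrow> y < r \<Longrightarrow> L2 (ereal r) < L1 (ereal y)"
        using eventually_at_left[of "r - 1" r] by auto
      obtain u where u: "b < u" "u < r" "isCont (\<lambda>x::real. L1 (ereal x)) u"
        "isCont (\<lambda>x::real. L2 (ereal x)) u"
        using mono_common_continuity_point[OF DeltaPlus_mono_real[OF L1]
            DeltaPlus_mono_real[OF L2] b(1)] by auto
      have "L1 (ereal u) \<le> L2 (ereal u)" using le u by auto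
      also have "\<dots> \<le> L2 (ereal r)" using DeltaPlus_mono_real[OF L2] u(2) by (auto simp: mono_def)
      also have "\<dots> < L1 (ereal u)" using b u by auto
      finally show False by simp
    qed
  qed (use DeltaPlusD[OF L1] DeltaPlusD[OF L2] in simp_all)
qed

lemma weak_conv_le:
  assumes "weak_conv A L1" "weak_conv B L2" "\<And>n. A n \<le> B n" "L1 \<in> DeltaPlus" "L2 \<in> DeltaPlus"
  shows "L1 \<le> L2"
proof (rule DeltaPlus_le_if_le_at_continuity_points[OF assms(4,5)])
  fix t assume "isCont (\<lambda>x::real. L1 (ereal x)) t" "isCont (\<lambda>x::real. L2 (ereal x)) t"
  then have "(\<lambda>n. A n (ereal t)) \<longlonglongrightarrow> L1 (ereal t)" "(\<lambda>n. B n (ereal t)) \<longlonglongrightarrow> L2 (ereal t)"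
    using assms(1,2) unfolding Defs.weak_conv_def by auto
  then show "L1 (ereal t) \<le> L2 (ereal t)"
    by (rule LIMSEQ_le) (use assms(3) in \<open>auto simp: le_fun_def\<close>)
qed

lemma weak_conv_const: "weak_conv (\<lambda>n. F) F"
  unfolding Defs.weak_conv_def by simp

lemma weak_conv_lower_bound:
  fixes N :: nat and s t :: real
  assumes conv: "weak_conv Fs F" and Fs: "\<And>n. Fs n \<in> DeltaPlus" and F: "F \<in> DeltaPlus"
    and bound: "\<And>n. n \<ge> N \<Longrightarrow> c \<le> Fs n (ereal s)" and "s < t"
  shows "c \<le> F (ereal t)"
proof -
  obtain u where u: "s < u" "u < t" "isCont (\<lambda>y. F (ereal y)) u"
    using mono_common_continuity_point[OF DeltaPlus_mono_real[OF F] DeltaPlus_mono_real[OF F]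
        \<open>s < t\<close>] by auto
  have "c \<le> Fs n (ereal u)" if "n \<ge> N" for n
    using bound[OF that] DeltaPlus_mono_real[OF Fs, of n] u(1)
    by (auto simp: mono_def intro: order_trans)
  then have "c \<le> F (ereal u)"
    using LIMSEQ_le_const[of "\<lambda>n. Fs n (ereal u)"] conv u(3)
    unfolding Defs.weak_conv_def by blast
  also have "\<dots> \<le> F (ereal t)" using DeltaPlus_mono_real[OF F] u(2) by (auto simp: mono_def)
  finally show ?thesis .
qed

subsection \<open>Helly's selection theorem in \<open>\<Delta>\<^sup>+\<close>\<close>

text \<open>The library's Helly selection theorem is about right-continuous functions on the reals,
so a left-continuous \<open>F\<close> is passed to it as \<open>x \<mapsto> - F (- x)\<close>; a limit \<open>G\<close> of such functions
is turned back into an element of \<open>\<Delta>\<^sup>+\<close> by the following reflection, which also forces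
the value \<open>0\<close> on \<open>[-\<infinity>, 0]\<close> and \<open>1\<close> at \<open>+\<infinity>\<close>.\<close>

definition unreflect :: "(real \<Rightarrow> real) \<Rightarrow> ereal \<Rightarrow> real" where
  "unreflect G t = (case t of ereal r \<Rightarrow> if r \<le> 0 then 0 else - G (- r) | PInfty \<Rightarrow> 1 | MInfty \<Rightarrow> 0)"

lemma unreflect_simps [simp]:
  "unreflect G (ereal r) = (if r \<le> 0 then 0 else - G (- r))"
  "unreflect G \<infinity> = 1" "unreflect G (-\<infinity>) = 0"
  by (simp_all add: unreflect_def)

lemma unreflect_in_DeltaPlus:
  assumes mono: "mono G" and rcont: "\<And>x. continuous (at_right x) G"
    and bounds: "\<And>x. -1 \<le> G x" "\<And>x. G x \<le> 0"
  shows "unreflect G \<in> DeltaPlus"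
proof -
  have range: "0 \<le> unreflect G t \<and> unreflect G t \<le> 1" for t
    using bounds by (cases t) (auto simp: abs_le_iff)
  have "unreflect G x \<le> unreflect G y" if "x \<le> y" for x y
  proof (cases x; cases y)
    fix r q assume "x = ereal r" "y = ereal q"
    then show ?thesis using monoD[OF mono, of "-q" "-r"] bounds(2)[of "-q"] that by auto
  qed (use that range bounds in auto)
  then have "mono (unreflect G)" by (rule monoI)
  moreover have "((\<lambda>x. unreflect G (ereal x)) \<longlongrightarrow> unreflect G (ereal r)) (at_left r)" for r
  proof (cases "r \<le> 0")
    case True
    have "\<forall>\<^sub>F x in at_left r. unreflect G (ereal x) = unreflect G (ereal r)"
      using True unfolding eventually_at_left[of "r - 1" r, simplified]
      by (intro exI[of _ "r - 1"]) auto
    then show ?thesis by (rule tendsto_eventually)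
  next
    case False
    then have r0: "0 < r" by simp
    have ev: "\<forall>\<^sub>F x in at_left r. - G (- x) = unreflect G (ereal x)"
      unfolding eventually_at_left[OF r0] by (intro exI[of _ 0]) (auto simp: r0)
    have "(G \<longlongrightarrow> G (-r)) (at_right (-r))" using rcont[of "-r"] by (simp add: continuous_within)
    then have "((\<lambda>x. - G (- x)) \<longlongrightarrow> - G (-r)) (at_left r)"
      unfolding filterlim_at_left_to_right by (auto intro: tendsto_minus)
    then show ?thesis using tendsto_cong[OF ev] r0 by simp
  qed
  ultimately show ?thesis
    unfolding DeltaPlus_def distribution_function_def using range by (auto simp: zero_ereal_def)
qed

lemma isCont_unreflect_imp_isCont:
  assumes "isCont (\<lambda>x. unreflect G (ereal x)) t" "0 < t"
  shows "isCont G (-t)"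
proof -
  have "isCont (\<lambda>y. - unreflect G (ereal (- y))) (-t)"
    using isCont_o2[where f=uminus and a="-t" and g="\<lambda>x. unreflect G (ereal x)"] assms(1)
    by (intro isCont_minus) simp
  moreover have "\<forall>\<^sub>F y in nhds (-t). - unreflect G (ereal (- y)) = G y"
    using eventually_nhds_in_open[of "{..<0}" "-t"] assms(2) by (auto elim!: eventually_mono)
  ultimately show ?thesis using isCont_cong by metis
qed

lemma DeltaPlus_weak_conv_subseq:
  fixes Fs :: "nat \<Rightarrow> ereal \<Rightarrow> real"
  assumes Fs: "\<And>n. Fs n \<in> DeltaPlus"
  shows "\<exists>s L. strict_mono s \<and> L \<in> DeltaPlus \<and> weak_conv (\<lambda>n. Fs (s n)) L"
proof -
  define g where "g n x = - Fs n (ereal (- x))" for n :: nat and x :: real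
  have "((\<lambda>y. Fs n (ereal (- y))) \<longlongrightarrow> Fs n (ereal (-x))) (at_right x)" for n x
    using DeltaPlusD(7)[OF Fs, of n "-x"] unfolding filterlim_at_left_to_right by simp
  then have rcont: "continuous (at_right x) (g n)" for n x
    unfolding g_def continuous_within by (auto intro: tendsto_minus)
  have mono: "mono (g n)" for n
    using DeltaPlus_mono_real[OF Fs, of n] unfolding g_def mono_def by auto
  have bounded: "\<bar>g n x\<bar> \<le> 1" for n x
    using DeltaPlusD(1,2)[OF Fs, of n] by (auto simp: g_def)
  obtain s G where s: "strict_mono s" and Grc: "\<And>x. continuous (at_right x) G" and Gm: "mono G"
    and Gb: "\<And>x. \<bar>G x\<bar> \<le> 1" and Glim: "\<And>x. isCont G x \<Longrightarrow> (\<lambda>n. g (s n) x) \<longlonglongrightarrow> G x"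
    using Helly_selection[of g 1, OF rcont mono bounded] by blast
  have "G x \<le> 0" for x
  proof -
    obtain y where y: "x < y" "isCont G y"
      using mono_common_continuity_point[OF Gm Gm, of x "x + 1"] by auto
    have "G x \<le> G y" using y Gm by (auto simp: mono_def)
    also have "G y \<le> 0"
      by (rule LIMSEQ_le_const2[OF Glim[OF y(2)]]) (use DeltaPlusD(1)[OF Fs] in \<open>auto simp: g_def\<close>)
    finally show ?thesis .
  qed
  then have L: "unreflect G \<in> DeltaPlus"
    using unreflect_in_DeltaPlus[OF Gm Grc] Gb by (auto simp: abs_le_iff)
  have "weak_conv (\<lambda>n. Fs (s n)) (unreflect G)"
    unfolding Defs.weak_conv_def
  proof (intro allI impI)
    fix t :: real assume ct: "isCont (\<lambda>x. unreflect G (ereal x)) t"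
    show "(\<lambda>n. Fs (s n) (ereal t)) \<longlonglongrightarrow> unreflect G (ereal t)"
    proof (cases "t \<le> 0")
      case True
      then show ?thesis using DeltaPlus_eq_0_nonpos[OF Fs] by (simp add: zero_ereal_def)
    next
      case False
      then have "(\<lambda>n. - g (s n) (-t)) \<longlonglongrightarrow> - G (-t)"
        using Glim[OF isCont_unreflect_imp_isCont[OF ct]] by (auto intro: tendsto_minus)
      then show ?thesis using False by (simp add: g_def)
    qed
  qed
  with s L show ?thesis by blast
qed

lemma LIMSEQ_if_subseq_has_LIMSEQ_subseq:
  fixes X :: "nat \<Rightarrow> real"
  assumes "\<And>r :: nat \<Rightarrow> nat. strict_mono r \<Longrightarrow> \<exists>r' :: nat \<Rightarrow> nat. strict_mono r' \<and> (\<lambda>n. X (r (r' n))) \<longlonglongrightarrow> l"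
  shows "X \<longlonglongrightarrow> l"
proof (rule ccontr)
  assume "\<not> X \<longlonglongrightarrow> l"
  then obtain e where e: "e > 0" "\<not> (\<forall>\<^sub>F n in sequentially. dist (X n) l < e)"
    unfolding tendsto_iff by auto
  define S where "S = {n. e \<le> dist (X n) l}"
  have "infinite S"
  proof
    assume "finite S"
    then obtain N where "S \<subseteq> {..<N}" using finite_nat_bounded by blast
    then have "\<forall>n\<ge>N. dist (X n) l < e" unfolding S_def by (auto simp: not_le[symmetric])
    then show False using e(2) unfolding eventually_sequentially by auto
  qed
  then have r: "strict_mono (enumerate S)" "\<And>n. enumerate S n \<in> S"
    by (auto simp: strict_mono_enumerate enumerate_in_set)
  obtain r' where "(\<lambda>n. X (enumerate S (r' n))) \<longlonglongrightarrow> l" using assms[OF r(1)] by blast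
  then obtain N where "\<forall>n\<ge>N. dist (X (enumerate S (r' n))) l < e"
    using e(1) unfolding tendsto_iff eventually_sequentially by blast
  moreover have "e \<le> dist (X (enumerate S (r' N))) l" using r(2) by (auto simp: S_def)
  ultimately show False by auto
qed

subsection \<open>Cauchy sequences in probabilistic metric spaces\<close>

lemma PM_spaceD:
  assumes "PM_space D T"
  shows "D p q \<in> DeltaPlus" "D p q = D q p" "T (D p q) (D q r) \<le> D p r"
  using assms unfolding PM_space_def by auto

lemma triangle_functionD:
  assumes "triangle_function T" "F \<in> DeltaPlus" "L \<in> DeltaPlus"
  shows "T F L \<in> DeltaPlus" "T F L = T L F" "T F H0 = F" "T H0 F = F"
  using assms H0_in_DeltaPlus unfolding triangle_function_def by metis+

lemma continuous_triangle_functionD: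
  assumes "continuous_triangle_function T"
    and "\<And>n. Fs n \<in> DeltaPlus" "\<And>n. Ls n \<in> DeltaPlus" "F \<in> DeltaPlus" "L \<in> DeltaPlus"
    and "weak_conv Fs F" "weak_conv Ls L"
  shows "weak_conv (\<lambda>n. T (Fs n) (Ls n)) (T F L)"
  using assms unfolding continuous_triangle_function_def by blast

lemma PM_Cauchy_subseqs_weak_conv_H0:
  assumes "PM_Cauchy D a" "strict_mono p" "strict_mono q"
  shows "weak_conv (\<lambda>n. D (a (p n)) (a (q n))) H0"
  unfolding Defs.weak_conv_def LIMSEQ_iff real_norm_def
proof (intro allI impI)
  fix t :: real and e :: real assume "e > 0"
  then obtain N where "\<forall>n\<ge>N. \<forall>m\<ge>N. \<bar>D (a n) (a m) (ereal t) - H0 (ereal t)\<bar> < e"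
    using assms(1) unfolding PM_Cauchy_def by blast
  moreover have "n \<le> p n" "n \<le> q n" for n
    using seq_suble[OF assms(2)] seq_suble[OF assms(3)] by auto
  ultimately show "\<exists>N. \<forall>n\<ge>N. \<bar>D (a (p n)) (a (q n)) (ereal t) - H0 (ereal t)\<bar> < e"
    by (meson order_trans)
qed

lemma PM_Cauchy_subseq_limits_le:
  assumes PM: "PM_space D T" and cont: "continuous_triangle_function T" and "PM_Cauchy D a"
    and "strict_mono p" "strict_mono q"
    and lim_p: "weak_conv (\<lambda>n. D (a (p n)) x) L1" and lim_q: "weak_conv (\<lambda>n. D (a (q n)) x) L2"
    and L1: "L1 \<in> DeltaPlus" and L2: "L2 \<in> DeltaPlus"
  shows "L2 \<le> L1"
proof -
  have "weak_conv (\<lambda>n. T (D (a (p n)) (a (q n))) (D (a (q n)) x)) (T H0 L2)"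
    using continuous_triangle_functionD[OF cont PM_spaceD(1)[OF PM] PM_spaceD(1)[OF PM]
        H0_in_DeltaPlus L2 PM_Cauchy_subseqs_weak_conv_H0 lim_q] assms(3-5) .
  then have "weak_conv (\<lambda>n. T (D (a (p n)) (a (q n))) (D (a (q n)) x)) L2"
    using triangle_functionD(4)[OF _ L2 L2] PM unfolding PM_space_def by simp
  from weak_conv_le[OF this lim_p PM_spaceD(3)[OF PM] L2 L1] show ?thesis .
qed

lemma PM_Cauchy_distances_weak_conv:
  assumes PM: "PM_space D T" and cont: "continuous_triangle_function T" and Cauchy: "PM_Cauchy D a"
  shows "\<exists>L. L \<in> DeltaPlus \<and> weak_conv (\<lambda>n. D (a n) x) L"
proof -
  note le = PM_Cauchy_subseq_limits_le[OF PM cont Cauchy]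
  obtain s L where s: "strict_mono s" and L: "L \<in> DeltaPlus" and lim: "weak_conv (\<lambda>n. D (a (s n)) x) L"
    using DeltaPlus_weak_conv_subseq[of "\<lambda>n. D (a n) x"] PM_spaceD(1)[OF PM] by blast
  have "(\<lambda>n. D (a n) x (ereal t)) \<longlonglongrightarrow> L (ereal t)" if ct: "isCont (\<lambda>y. L (ereal y)) t" for t
  proof (rule LIMSEQ_if_subseq_has_LIMSEQ_subseq)
    fix r :: "nat \<Rightarrow> nat" assume r: "strict_mono r"
    obtain r' L' where r': "strict_mono r'" and L': "L' \<in> DeltaPlus"
      and lim': "weak_conv (\<lambda>n. D (a (r (r' n))) x) L'"
      using DeltaPlus_weak_conv_subseq[of "\<lambda>n. D (a (r n)) x"] PM_spaceD(1)[OF PM] by blast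
    have rr': "strict_mono (r \<circ> r')" using r r' by (simp add: strict_mono_def)
    have "L' = L"
      using le[OF s rr' lim _ L L'] le[OF rr' s _ lim L' L] lim' by (auto intro: order.antisym)
    then show "\<exists>r'. strict_mono r' \<and> (\<lambda>n. D (a (r (r' n))) x (ereal t)) \<longlonglongrightarrow> L (ereal t)"
      using r' lim' ct unfolding Defs.weak_conv_def by blast
  qed
  then show ?thesis using L unfolding Defs.weak_conv_def by blast
qed

lemma weak_limit_of_distances_prob_1_Lipschitz:
  assumes PM: "PM_space D T" and cont: "continuous_triangle_function T"
    and f: "\<And>x. f x \<in> DeltaPlus" and lim: "\<And>x. weak_conv (\<lambda>n. D (a n) x) (f x)"
  shows "prob_1_Lipschitz D T f"
proof -
  have "T (D x y) (f y) \<le> f x" for x y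
  proof -
    have "weak_conv (\<lambda>n. T (D x y) (D (a n) y)) (T (D x y) (f y))"
      using continuous_triangle_functionD[OF cont PM_spaceD(1)[OF PM] PM_spaceD(1)[OF PM]
          PM_spaceD(1)[OF PM] f weak_conv_const lim] .
    moreover have "T (D x y) (D (a n) y) \<le> D (a n) x" for n
      using PM_spaceD(2,3)[OF PM] triangle_functionD(2)[of T "D x y" "D (a n) y"] PM
      unfolding PM_space_def by metis
    moreover have "T (D x y) (f y) \<in> DeltaPlus"
      using triangle_functionD(1)[OF _ PM_spaceD(1)[OF PM] f] PM unfolding PM_space_def by blast
    ultimately show ?thesis using weak_conv_le lim f by blast
  qed
  then show ?thesis unfolding prob_1_Lipschitz_def using f by blast
qed

lemma PM_Cauchy_weak_limit_along_sequence:
  assumes PM: "PM_space D T" and Cauchy: "PM_Cauchy D a"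
    and f: "\<And>x. f x \<in> DeltaPlus" and lim: "\<And>x. weak_conv (\<lambda>n. D (a n) x) (f x)"
  shows "weak_conv (\<lambda>n. f (a n)) H0"
  unfolding Defs.weak_conv_def
proof (intro allI impI)
  fix t :: real
  show "(\<lambda>n. f (a n) (ereal t)) \<longlonglongrightarrow> H0 (ereal t)"
  proof (cases "t \<le> 0")
    case True
    then show ?thesis using DeltaPlus_eq_0_nonpos[OF f] by (simp add: H0_def zero_ereal_def)
  next
    case False
    then have "0 < t" by simp
    have H0_pos: "H0 (ereal s) = 1" if "0 < s" for s using that by (simp add: H0_def zero_ereal_def)
    show ?thesis
      unfolding LIMSEQ_iff real_norm_def H0_pos[OF \<open>0 < t\<close>]
    proof (intro allI impI)
      fix e :: real assume "e > 0"
      then have "e/2 > 0" by simp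
      moreover have "H0 (ereal (t/2)) = 1" using \<open>0 < t\<close> by (simp add: H0_pos)
      ultimately obtain N where N: "\<forall>m\<ge>N. \<forall>n\<ge>N. \<bar>D (a m) (a n) (ereal (t/2)) - 1\<bar> < e/2"
        using Cauchy unfolding PM_Cauchy_def by metis
      have "1 - e/2 \<le> D (a m) (a n) (ereal (t/2))" if "N \<le> m" "N \<le> n" for m n
        using N[rule_format, OF that] by (simp only: abs_less_iff) linarith
      then have "1 - e/2 \<le> f (a n) (ereal t)" if "N \<le> n" for n
        by (rule weak_conv_lower_bound[OF lim PM_spaceD(1)[OF PM] f, where N=N and s="t/2"])
          (use that \<open>0 < t\<close> in auto)
      then show "\<exists>N. \<forall>n\<ge>N. \<bar>f (a n) (ereal t) - 1\<bar> < e"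
        using DeltaPlusD(2)[OF f] \<open>e > 0\<close> by (force simp: abs_less_iff)
    qed
  qed
qed

theorem mainTheorem9:
  fixes D :: "'a \<Rightarrow> 'a \<Rightarrow> (ereal \<Rightarrow> real)"
    and T :: "(ereal \<Rightarrow> real) \<Rightarrow> (ereal \<Rightarrow> real) \<Rightarrow> (ereal \<Rightarrow> real)"
    and a :: "nat \<Rightarrow> 'a"
  assumes "PM_space D T"
    and "continuous_triangle_function T"
    and "PM_Cauchy D a"
  shows "\<exists>f. prob_1_Lipschitz D T f \<and>
             (\<forall>x. weak_conv (\<lambda>n. D (a n) x) (f x)) \<and>
             weak_conv (\<lambda>n. f (a n)) H0"
proof -
  obtain f where f: "\<And>x. f x \<in> DeltaPlus" and lim: "\<And>x. weak_conv (\<lambda>n. D (a n) x) (f x)"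
    using PM_Cauchy_distances_weak_conv[OF assms] by metis
  show ?thesis
    using weak_limit_of_distances_prob_1_Lipschitz[OF assms(1,2) f lim]
      PM_Cauchy_weak_limit_along_sequence[OF assms(1,3) f lim] lim by blast
qed

end
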